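(* Let $g_1,g_2$ be holomorphic functions on a domain $\mathcal{D}\subset\mathbb{C}$ with $g_1'g_2'\neq 0$ on $\mathcal{D}$, let $\sqrt{g_1'g_2'}$ be a holomorphic branch of the square root on $\mathcal{D}$, and define $\Phi=(\phi_1,\phi_2,\phi_3,\phi_4):\mathcal{D}\to\mathbb{C}^4$ by $$\phi_1=\frac{\mathrm{i}}{2}\frac{g_1g_2+1}{\sqrt{g_1'g_2'}},\quad \phi_2=\frac12\frac{g_1g_2-1}{\sqrt{g_1'g_2'}},\quad \phi_3=\frac12\frac{g_1+g_2}{\sqrt{g_1'g_2'}},\quad \phi_4=\frac{\mathrm{i}}{2}\frac{g_1-g_2}{\sqrt{g_1'g_2'}}.$$ Let $\Psi$ be a holomorphic function on $\mathcal{D}$ with $\Psi'=\Phi$ and set $\mathrm{x}(u,v)=\operatorname{Re}\Psi(u+\mathrm{i}v)$. Then $\mathrm{x}$ defines a minimal surface of general type in $\mathbb{R}^4$, and $(u,v)$ are canonical coordinates of the first type on it.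
   Context: A minimal surface in $\mathbb{R}^4$ is a regular surface with zero mean curvature vector. With $E=\mathrm{x}_u^2$, $X_1=\mathrm{x}_u/\|\mathrm{x}_u\|$, $X_2=\mathrm{x}_v/\|\mathrm{x}_v\|$ and second fundamental form $\sigma$: a point is superconformal if $\sigma(X_1,X_1)\perp\sigma(X_1,X_2)$ and $\|\sigma(X_1,X_1)\|=\|\sigma(X_1,X_2)\|$ there; a minimal surface is of general type if it has no superconformal points. Isothermal coordinates $(u,v)$ ($E=G$, $F=0$) are canonical of the first type if $\sigma(X_1,X_1)\perp\sigma(X_1,X_2)$ and $E^2(\|\sigma(X_1,X_1)\|^2-\|\sigma(X_1,X_2)\|^2)=1$. *)

theory Defs
  imports "HOL-Analysis.Analysis"
begin

text \<open>A parametrized surface is a map x from (an open subset of) the complex plane,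
  identified with R^2 via u + i v, to R^4 (type real^4).\<close>

definition pdu :: "(complex \<Rightarrow> 'a::real_normed_vector) \<Rightarrow> complex \<Rightarrow> 'a" where
  "pdu f p = frechet_derivative f (at p) 1"

definition pdv :: "(complex \<Rightarrow> 'a::real_normed_vector) \<Rightarrow> complex \<Rightarrow> 'a" where
  "pdv f p = frechet_derivative f (at p) \<i>"

definition fE :: "(complex \<Rightarrow> real^4) \<Rightarrow> complex \<Rightarrow> real" where
  "fE x p = pdu x p \<bullet> pdu x p"
definition fF :: "(complex \<Rightarrow> real^4) \<Rightarrow> complex \<Rightarrow> real" where
  "fF x p = pdu x p \<bullet> pdv x p"
definition fG :: "(complex \<Rightarrow> real^4) \<Rightarrow> complex \<Rightarrow> real" where
  "fG x p = pdv x p \<bullet> pdv x p"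

text \<open>Normal component of a vector w at p: w minus its orthogonal projection onto the
  tangent plane span{x_u, x_v} (explicit Gram formula).\<close>
definition normal_part :: "(complex \<Rightarrow> real^4) \<Rightarrow> complex \<Rightarrow> real^4 \<Rightarrow> real^4" where
  "normal_part x p w =
     (let E = fE x p; F = fF x p; G = fG x p; a = w \<bullet> pdu x p; b = w \<bullet> pdv x p;
          D = E * G - F^2
      in w - (((G * a - F * b) / D) *\<^sub>R pdu x p + ((E * b - F * a) / D) *\<^sub>R pdv x p))"

definition sff11 :: "(complex \<Rightarrow> real^4) \<Rightarrow> complex \<Rightarrow> real^4" where
  "sff11 x p = normal_part x p (pdu (pdu x) p)"
definition sff12 :: "(complex \<Rightarrow> real^4) \<Rightarrow> complex \<Rightarrow> real^4" where
  "sff12 x p = normal_part x p (pdv (pdu x) p)"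
definition sff22 :: "(complex \<Rightarrow> real^4) \<Rightarrow> complex \<Rightarrow> real^4" where
  "sff22 x p = normal_part x p (pdv (pdv x) p)"

text \<open>sigma(X1,X1) and sigma(X1,X2) with X1 = x_u/|x_u|, X2 = x_v/|x_v| (bilinearity).\<close>
definition sigma11 :: "(complex \<Rightarrow> real^4) \<Rightarrow> complex \<Rightarrow> real^4" where
  "sigma11 x p = (1 / fE x p) *\<^sub>R sff11 x p"
definition sigma12 :: "(complex \<Rightarrow> real^4) \<Rightarrow> complex \<Rightarrow> real^4" where
  "sigma12 x p = (1 / (norm (pdu x p) * norm (pdv x p))) *\<^sub>R sff12 x p"

text \<open>Mean curvature vector H = (1/2) trace_g sigma.\<close>
definition mean_curv_vec :: "(complex \<Rightarrow> real^4) \<Rightarrow> complex \<Rightarrow> real^4" where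
  "mean_curv_vec x p =
     (1 / (2 * (fE x p * fG x p - (fF x p)^2))) *\<^sub>R
       (fG x p *\<^sub>R sff11 x p - (2 * fF x p) *\<^sub>R sff12 x p + fE x p *\<^sub>R sff22 x p)"

definition regular_surface :: "complex set \<Rightarrow> (complex \<Rightarrow> real^4) \<Rightarrow> bool" where
  "regular_surface D x \<longleftrightarrow> open D \<and> D \<noteq> {} \<and>
     (\<forall>p\<in>D. x differentiable at p \<and> pdu x differentiable at p \<and> pdv x differentiable at p) \<and>
     continuous_on D (pdu (pdu x)) \<and> continuous_on D (pdv (pdu x)) \<and>
     continuous_on D (pdu (pdv x)) \<and> continuous_on D (pdv (pdv x)) \<and>
     (\<forall>p\<in>D. \<forall>a b::real. a *\<^sub>R pdu x p + b *\<^sub>R pdv x p = 0 \<longrightarrow> a = 0 \<and> b = 0)"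

definition minimal_surface :: "complex set \<Rightarrow> (complex \<Rightarrow> real^4) \<Rightarrow> bool" where
  "minimal_surface D x \<longleftrightarrow> regular_surface D x \<and> (\<forall>p\<in>D. mean_curv_vec x p = 0)"

definition superconformal_point :: "(complex \<Rightarrow> real^4) \<Rightarrow> complex \<Rightarrow> bool" where
  "superconformal_point x p \<longleftrightarrow>
     sigma11 x p \<bullet> sigma12 x p = 0 \<and> norm (sigma11 x p) = norm (sigma12 x p)"

definition minimal_general_type :: "complex set \<Rightarrow> (complex \<Rightarrow> real^4) \<Rightarrow> bool" where
  "minimal_general_type D x \<longleftrightarrow> minimal_surface D x \<and> (\<forall>p\<in>D. \<not> superconformal_point x p)"

definition canonical_first_type :: "complex set \<Rightarrow> (complex \<Rightarrow> real^4) \<Rightarrow> bool" where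
  "canonical_first_type D x \<longleftrightarrow> (\<forall>p\<in>D.
     fE x p = fG x p \<and> fF x p = 0 \<and> sigma11 x p \<bullet> sigma12 x p = 0 \<and>
     (fE x p)^2 * ((norm (sigma11 x p))^2 - (norm (sigma12 x p))^2) = 1)"

end

theory Submission
  imports Defs "HOL-Complex_Analysis.Cauchy_Integral_Formula"
begin

text \<open>Write \<open>\<Phi> = \<Psi>'\<close> and let \<open>v \<cdot> w = \<Sum> v\<^sub>i w\<^sub>i\<close> be the complex bilinear dot product.
  For \<open>x = Re \<Psi>\<close> one has \<open>x\<^sub>u = Re \<Phi>\<close>, \<open>x\<^sub>v = Re (\<i>\<Phi>)\<close>, \<open>x\<^sub>u\<^sub>u = - x\<^sub>v\<^sub>v = Re \<Phi>'\<close> and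
  \<open>x\<^sub>u\<^sub>v = Re (\<i>\<Phi>')\<close>, while \<open>Re v \<bullet> Re w - Re (\<i>v) \<bullet> Re (\<i>w) = Re (v \<cdot> w)\<close> and the mixed
  products give \<open>- Im (v \<cdot> w)\<close>. Hence \<open>\<Phi> \<cdot> \<Phi> = 0\<close> makes \<open>(u,v)\<close> isothermal,
  \<open>x\<^sub>u\<^sub>u + x\<^sub>v\<^sub>v = 0\<close> makes the surface minimal, and \<open>\<Phi>' \<cdot> \<Phi> = 0\<close>, \<open>\<Phi>' \<cdot> \<Phi>' = 1\<close> make the
  normal parts of \<open>x\<^sub>u\<^sub>u, x\<^sub>u\<^sub>v\<close> orthogonal with difference of squared lengths \<open>1\<close>, which is
  exactly the canonical normalisation and excludes superconformal points.
  Here \<open>\<Phi> = w / s\<close> with \<open>w\<close> built from \<open>g\<^sub>1, g\<^sub>2\<close>: \<open>w\<close> is null, orthogonal to \<open>w'\<close> and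
  \<open>w' \<cdot> w' = g\<^sub>1' g\<^sub>2' = s\<^sup>2\<close>, so \<open>\<Phi>' \<cdot> \<Phi>' = 1\<close>.\<close>

definition Re_vec :: "complex^'n \<Rightarrow> real^'n" where
  "Re_vec v = (\<chi> i. Re (v $ i))"

definition cdot :: "complex^'n \<Rightarrow> complex^'n \<Rightarrow> complex" where
  "cdot v w = (\<Sum>i\<in>UNIV. v $ i * w $ i)"

definition vderiv :: "(complex \<Rightarrow> complex^'n) \<Rightarrow> complex \<Rightarrow> complex^'n" where
  "vderiv f z = (\<chi> i. deriv (\<lambda>w. f w $ i) z)"

lemma Re_vec_nth [simp]: "Re_vec v $ i = Re (v $ i)"
  by (simp add: Re_vec_def)

lemma Re_vec_uminus [simp]: "Re_vec (- v) = - Re_vec v"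
  by (simp add: vec_eq_iff)

lemma Re_vec_eq_0_imp:
  assumes "Re_vec v = 0" and "Re_vec (\<i> *s v) = 0"
  shows "v = 0"
  using assms by (simp add: vec_eq_iff complex_eq_iff)

lemma inner_Re_vec:
  "Re_vec v \<bullet> Re_vec w - Re_vec (\<i> *s v) \<bullet> Re_vec (\<i> *s w) = Re (cdot v w)"
  "Re_vec v \<bullet> Re_vec (\<i> *s w) + Re_vec (\<i> *s v) \<bullet> Re_vec w = - Im (cdot v w)"
proof -
  have "Re_vec v \<bullet> Re_vec w - Re_vec (\<i> *s v) \<bullet> Re_vec (\<i> *s w)
      = (\<Sum>i\<in>UNIV. Re (v $ i) * Re (w $ i) - Im (v $ i) * Im (w $ i))"
    by (simp add: inner_vec_def sum_subtractf)
  then show "Re_vec v \<bullet> Re_vec w - Re_vec (\<i> *s v) \<bullet> Re_vec (\<i> *s w) = Re (cdot v w)"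
    by (simp add: cdot_def Re_sum)
  have "Re_vec v \<bullet> Re_vec (\<i> *s w) + Re_vec (\<i> *s v) \<bullet> Re_vec w
      = - (\<Sum>i\<in>UNIV. Re (v $ i) * Im (w $ i) + Im (v $ i) * Re (w $ i))"
    by (simp add: inner_vec_def sum.distrib sum_negf)
  then show "Re_vec v \<bullet> Re_vec (\<i> *s w) + Re_vec (\<i> *s v) \<bullet> Re_vec w = - Im (cdot v w)"
    by (simp add: cdot_def Im_sum)
qed

lemma cdot_commute: "cdot v w = cdot w v"
  by (simp add: cdot_def mult.commute)

lemma cdot_scale_left [simp]: "cdot (c *s v) w = c * cdot v w"
  by (simp add: cdot_def sum_distrib_left mult.assoc)

lemma cdot_scale_right [simp]: "cdot v (c *s w) = c * cdot v w"
  by (simp add: cdot_def sum_distrib_left algebra_simps)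

lemma cdot_diff_left [simp]: "cdot (u - v) w = cdot u w - cdot v w"
  by (simp add: cdot_def sum_subtractf algebra_simps)

lemma cdot_diff_right [simp]: "cdot u (v - w) = cdot u v - cdot u w"
  by (simp add: cdot_def sum_subtractf algebra_simps)

lemma has_derivative_Re_vec:
  fixes f :: "complex \<Rightarrow> complex^'n"
  assumes "\<And>i. ((\<lambda>z. f z $ i) has_field_derivative f' $ i) (at p)"
  shows "((\<lambda>z. Re_vec (f z)) has_derivative (\<lambda>h. Re_vec (h *s f'))) (at p)"
proof (rule has_derivative_componentwise_within[where S=UNIV, THEN iffD2], intro ballI)
  fix b :: "real^'n" assume "b \<in> Basis"
  then obtain i where b: "b = axis i 1"
    by (auto simp: Basis_vec_def)
  have "((\<lambda>z. Re (f z $ i)) has_derivative (\<lambda>h. Re (h * f' $ i))) (at p)"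
    using has_derivative_Re[OF assms[of i, unfolded has_field_derivative_def]]
    by (simp only: mult.commute)
  then show "((\<lambda>z. Re_vec (f z) \<bullet> b) has_derivative (\<lambda>h. Re_vec (h *s f') \<bullet> b)) (at p)"
    by (simp add: b inner_axis)
qed

lemma has_derivative_Re_vec_holomorphic:
  fixes f :: "complex \<Rightarrow> complex^'n"
  assumes "open D" "p \<in> D" "\<And>i. (\<lambda>z. f z $ i) holomorphic_on D"
    and "\<And>z. z \<in> D \<Longrightarrow> x z = Re_vec (f z)"
  shows "(x has_derivative (\<lambda>h. Re_vec (h *s vderiv f p))) (at p)"
proof -
  have "((\<lambda>z. Re_vec (f z)) has_derivative (\<lambda>h. Re_vec (h *s vderiv f p))) (at p)"
    by (rule has_derivative_Re_vec) (simp add: vderiv_def holomorphic_derivI[OF assms(3) assms(1,2)])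
  then show ?thesis
    by (rule has_derivative_transform_within_open[OF _ assms(1,2)]) (simp add: assms(4))
qed

lemma pdu_pdv_Re_vec_holomorphic:
  fixes f :: "complex \<Rightarrow> complex^'n"
  assumes "open D" "p \<in> D" "\<And>i. (\<lambda>z. f z $ i) holomorphic_on D"
    and "\<And>z. z \<in> D \<Longrightarrow> x z = Re_vec (f z)"
  shows "pdu x p = Re_vec (vderiv f p)" and "pdv x p = Re_vec (\<i> *s vderiv f p)"
proof -
  have "frechet_derivative x (at p) = (\<lambda>h. Re_vec (h *s vderiv f p))"
    using frechet_derivative_at[OF has_derivative_Re_vec_holomorphic[OF assms]] ..
  then show "pdu x p = Re_vec (vderiv f p)" and "pdv x p = Re_vec (\<i> *s vderiv f p)"
    by (simp_all add: pdu_def pdv_def)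
qed

lemma holomorphic_on_vderiv_nth:
  fixes f :: "complex \<Rightarrow> complex^'n"
  assumes "open D" "\<And>i. (\<lambda>z. f z $ i) holomorphic_on D"
  shows "(\<lambda>z. vderiv f z $ i) holomorphic_on D"
  by (simp add: vderiv_def holomorphic_deriv assms)

lemma vderiv_scale:
  fixes f :: "complex \<Rightarrow> complex^'n"
  assumes "open D" "p \<in> D" "\<And>i. (\<lambda>z. f z $ i) holomorphic_on D"
  shows "vderiv (\<lambda>z. c *s f z) p = c *s vderiv f p"
proof -
  have "deriv (\<lambda>w. c * f w $ i) p = c * deriv (\<lambda>w. f w $ i) p" for i
    by (rule deriv_cmult) (rule holomorphic_on_imp_differentiable_at[OF assms(3) assms(1,2)])
  then show ?thesis
    by (simp add: vec_eq_iff vderiv_def)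
qed

lemma Re_surface_derivatives:
  fixes \<Psi> :: "complex \<Rightarrow> complex^'n"
  assumes "open D" "p \<in> D" "\<And>i. (\<lambda>z. \<Psi> z $ i) holomorphic_on D"
  defines "x \<equiv> \<lambda>z. Re_vec (\<Psi> z)" and "\<Phi> \<equiv> vderiv \<Psi>"
  shows "pdu x p = Re_vec (\<Phi> p)" and "pdv x p = Re_vec (\<i> *s \<Phi> p)"
    and "pdu (pdu x) p = Re_vec (vderiv \<Phi> p)" and "pdv (pdu x) p = Re_vec (\<i> *s vderiv \<Phi> p)"
    and "pdu (pdv x) p = Re_vec (\<i> *s vderiv \<Phi> p)" and "pdv (pdv x) p = - Re_vec (vderiv \<Phi> p)"
proof -
  have pdx: "pdu x z = Re_vec (\<Phi> z)" "pdv x z = Re_vec (\<i> *s \<Phi> z)" if "z \<in> D" for z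
    using pdu_pdv_Re_vec_holomorphic[OF assms(1) that assms(3)] by (simp_all add: x_def \<Phi>_def)
  then show "pdu x p = Re_vec (\<Phi> p)" "pdv x p = Re_vec (\<i> *s \<Phi> p)"
    using assms(2) by simp_all
  have holo: "(\<lambda>z. \<Phi> z $ i) holomorphic_on D" for i
    unfolding \<Phi>_def by (rule holomorphic_on_vderiv_nth[OF assms(1,3)])
  then have holo_i: "(\<lambda>z. (\<i> *s \<Phi> z) $ i) holomorphic_on D" for i
    by (simp add: holomorphic_on_mult)
  show "pdu (pdu x) p = Re_vec (vderiv \<Phi> p)" "pdv (pdu x) p = Re_vec (\<i> *s vderiv \<Phi> p)"
    using pdu_pdv_Re_vec_holomorphic[OF assms(1,2) holo pdx(1)] by simp_all
  show "pdu (pdv x) p = Re_vec (\<i> *s vderiv \<Phi> p)" "pdv (pdv x) p = - Re_vec (vderiv \<Phi> p)"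
    using pdu_pdv_Re_vec_holomorphic[OF assms(1,2) holo_i pdx(2)] vderiv_scale[OF assms(1,2) holo]
    by simp_all
qed

lemma continuous_on_Re_vec:
  assumes "\<And>i. continuous_on D (\<lambda>z. f z $ i)"
  shows "continuous_on D (\<lambda>z. Re_vec (f z))"
  unfolding Re_vec_def by (intro continuous_intros assms)

lemma isotropic_Re_vec_conformal:
  assumes "cdot \<phi> \<phi> = 0" and "\<phi> \<noteq> 0"
  shows "Re_vec \<phi> \<bullet> Re_vec \<phi> = Re_vec (\<i> *s \<phi>) \<bullet> Re_vec (\<i> *s \<phi>)"
    and "Re_vec \<phi> \<bullet> Re_vec (\<i> *s \<phi>) = 0"
    and "Re_vec \<phi> \<noteq> 0"
proof -
  show eq: "Re_vec \<phi> \<bullet> Re_vec \<phi> = Re_vec (\<i> *s \<phi>) \<bullet> Re_vec (\<i> *s \<phi>)"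
    using inner_Re_vec(1)[of \<phi> \<phi>] assms(1) by simp
  show "Re_vec \<phi> \<bullet> Re_vec (\<i> *s \<phi>) = 0"
    using inner_Re_vec(2)[of \<phi> \<phi>] assms(1) by (simp add: inner_commute)
  show "Re_vec \<phi> \<noteq> 0"
    using eq assms(2) Re_vec_eq_0_imp by force
qed

lemma conformal_independent:
  fixes a b :: "'a::real_inner"
  assumes "a \<bullet> a = b \<bullet> b" and "a \<bullet> b = 0" and "a \<noteq> 0"
    and "\<alpha> *\<^sub>R a + \<beta> *\<^sub>R b = 0"
  shows "\<alpha> = 0 \<and> \<beta> = 0"
proof -
  have "(\<alpha> *\<^sub>R a + \<beta> *\<^sub>R b) \<bullet> a = 0" "(\<alpha> *\<^sub>R a + \<beta> *\<^sub>R b) \<bullet> b = 0"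
    using assms(4) by simp_all
  then have "\<alpha> * (a \<bullet> a) = 0" "\<beta> * (a \<bullet> a) = 0"
    using assms(1,2) by (simp_all add: inner_add_left inner_commute[of b a])
  then show ?thesis
    using assms(3) by simp
qed

lemma regular_surface_Re_vec:
  fixes \<Psi> :: "complex \<Rightarrow> complex^4"
  assumes "open D" and "D \<noteq> {}" and holo: "\<And>i. (\<lambda>z. \<Psi> z $ i) holomorphic_on D"
    and "\<And>z. z \<in> D \<Longrightarrow> cdot (vderiv \<Psi> z) (vderiv \<Psi> z) = 0"
    and "\<And>z. z \<in> D \<Longrightarrow> vderiv \<Psi> z \<noteq> 0"
  shows "regular_surface D (\<lambda>z. Re_vec (\<Psi> z))"
proof -
  define x where "x = (\<lambda>z. Re_vec (\<Psi> z))"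
  define \<Phi> where "\<Phi> = vderiv \<Psi>"
  have holo\<Phi>: "(\<lambda>z. \<Phi> z $ i) holomorphic_on D" for i
    unfolding \<Phi>_def by (rule holomorphic_on_vderiv_nth[OF assms(1) holo])
  then have holo_i\<Phi>: "(\<lambda>z. (\<i> *s \<Phi> z) $ i) holomorphic_on D" for i
    by (simp add: holomorphic_on_mult)
  have holo_d\<Phi>: "(\<lambda>z. vderiv \<Phi> z $ i) holomorphic_on D" "(\<lambda>z. (\<i> *s vderiv \<Phi> z) $ i) holomorphic_on D" for i
    using holomorphic_on_vderiv_nth[OF assms(1) holo\<Phi>] by (simp_all add: holomorphic_on_mult)
  have pdx: "pdu x z = Re_vec (\<Phi> z)" "pdv x z = Re_vec (\<i> *s \<Phi> z)" if "z \<in> D" for z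
    using pdu_pdv_Re_vec_holomorphic[OF assms(1) that holo] by (simp_all add: x_def \<Phi>_def)
  have "x differentiable at p" "pdu x differentiable at p" "pdv x differentiable at p" if "p \<in> D" for p
    using has_derivative_Re_vec_holomorphic[OF assms(1) that holo, of x]
      has_derivative_Re_vec_holomorphic[OF assms(1) that holo\<Phi> pdx(1)]
      has_derivative_Re_vec_holomorphic[OF assms(1) that holo_i\<Phi> pdx(2)]
    by (auto simp: x_def intro: differentiableI)
  moreover have "continuous_on D (pdu (pdu x))" "continuous_on D (pdv (pdu x))"
    "continuous_on D (pdu (pdv x))" "continuous_on D (pdv (pdv x))"
  proof -
    have "continuous_on D (\<lambda>z. Re_vec (vderiv \<Phi> z))" "continuous_on D (\<lambda>z. Re_vec (\<i> *s vderiv \<Phi> z))"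
      by (intro continuous_on_Re_vec holomorphic_on_imp_continuous_on holo_d\<Phi>)+
    with Re_surface_derivatives[OF assms(1) _ holo, folded x_def \<Phi>_def] show
      "continuous_on D (pdu (pdu x))" "continuous_on D (pdv (pdu x))"
      "continuous_on D (pdu (pdv x))" "continuous_on D (pdv (pdv x))"
      by (auto cong: continuous_on_cong intro: continuous_intros)
  qed
  moreover have "a = 0 \<and> b = 0" if "p \<in> D" "a *\<^sub>R pdu x p + b *\<^sub>R pdv x p = 0" for p a b
    using conformal_independent[OF isotropic_Re_vec_conformal[OF assms(4,5)[OF \<open>p \<in> D\<close>]]] that
    by (simp add: pdx \<Phi>_def)
  ultimately show ?thesis
    using assms(1,2) by (auto simp: regular_surface_def x_def)
qed

text \<open>The hypotheses on \<open>A, B\<close> make the tangential corrections cancel: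
  \<open>(A \<bullet> a)(B \<bullet> a) + (A \<bullet> b)(B \<bullet> b) = 0\<close> and \<open>(A \<bullet> a)\<^sup>2 + (A \<bullet> b)\<^sup>2 = (B \<bullet> a)\<^sup>2 + (B \<bullet> b)\<^sup>2\<close>.\<close>

lemma normal_projection_inner:
  fixes a b A B :: "'a::real_inner"
  assumes "a \<bullet> a = E" "b \<bullet> b = E" "a \<bullet> b = 0" "E \<noteq> 0"
    and "A \<bullet> a = B \<bullet> b" "A \<bullet> b = - (B \<bullet> a)"
  defines "N \<equiv> \<lambda>w. w - ((w \<bullet> a) / E) *\<^sub>R a - ((w \<bullet> b) / E) *\<^sub>R b"
  shows "N A \<bullet> N B = A \<bullet> B" and "N A \<bullet> N A - N B \<bullet> N B = A \<bullet> A - B \<bullet> B"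
proof -
  have ba: "b \<bullet> a = 0"
    using assms(3) by (simp add: inner_commute)
  show "N A \<bullet> N B = A \<bullet> B" "N A \<bullet> N A - N B \<bullet> N B = A \<bullet> A - B \<bullet> B"
    unfolding N_def using assms(1-6) ba
    by (simp_all only: inner_diff_left inner_diff_right inner_scaleR_left inner_scaleR_right)
      (simp_all add: inner_commute[of b a] inner_commute[of a A] inner_commute[of b A]
        inner_commute[of a B] inner_commute[of b B] inner_commute[of B A] field_simps power2_eq_square)
qed

lemma normal_part_conformal:
  assumes "fE x p = fG x p" and "fF x p = 0" and "fE x p \<noteq> 0"
  shows "normal_part x p w =
    w - ((w \<bullet> pdu x p) / fE x p) *\<^sub>R pdu x p - ((w \<bullet> pdv x p) / fE x p) *\<^sub>R pdv x p"
  using assms by (simp add: normal_part_def Let_def power2_eq_square algebra_simps)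

lemma Re_surface_curvature:
  fixes x :: "complex \<Rightarrow> real^4"
  assumes "pdu x p = Re_vec \<phi>" "pdv x p = Re_vec (\<i> *s \<phi>)"
    and "pdu (pdu x) p = Re_vec \<phi>'" "pdv (pdu x) p = Re_vec (\<i> *s \<phi>')"
    and "pdv (pdv x) p = - Re_vec \<phi>'"
    and "cdot \<phi> \<phi> = 0" "\<phi> \<noteq> 0" "cdot \<phi>' \<phi> = 0" "cdot \<phi>' \<phi>' = 1"
  shows "fE x p = fG x p" and "fF x p = 0" and "mean_curv_vec x p = 0"
    and "sigma11 x p \<bullet> sigma12 x p = 0"
    and "(fE x p)\<^sup>2 * ((norm (sigma11 x p))\<^sup>2 - (norm (sigma12 x p))\<^sup>2) = 1"
proof -
  define a where "a = Re_vec \<phi>"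
  define b where "b = Re_vec (\<i> *s \<phi>)"
  define A where "A = Re_vec \<phi>'"
  define B where "B = Re_vec (\<i> *s \<phi>')"
  define E where "E = a \<bullet> a"
  note conf = isotropic_Re_vec_conformal[OF assms(6,7), folded a_def b_def]
  have E: "E > 0" "b \<bullet> b = E"
    using conf(1,3) by (auto simp: E_def)
  have Aa: "A \<bullet> a = B \<bullet> b" and Ab: "A \<bullet> b = - (B \<bullet> a)"
    using inner_Re_vec[of \<phi>' \<phi>] assms(8) by (simp_all add: a_def b_def A_def B_def inner_commute)
  have AB: "A \<bullet> B = 0" and AA: "A \<bullet> A - B \<bullet> B = 1"
    using inner_Re_vec[of \<phi>' \<phi>'] assms(9) by (simp_all add: A_def B_def inner_commute)
  show fEG: "fE x p = fG x p" "fF x p = 0"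
    using conf assms(1,2) by (simp_all add: fE_def fG_def fF_def a_def b_def)
  define N where "N = (\<lambda>w. w - ((w \<bullet> a) / E) *\<^sub>R a - ((w \<bullet> b) / E) *\<^sub>R b)"
  have fE: "fE x p = E"
    using assms(1) by (simp add: fE_def E_def a_def)
  have np: "normal_part x p w = N w" for w
    using normal_part_conformal[OF fEG] E by (simp add: fE N_def assms(1,2) a_def b_def)
  have NAB: "N A \<bullet> N B = 0" "N A \<bullet> N A - N B \<bullet> N B = 1"
    using normal_projection_inner[OF E_def[symmetric] E(2) conf(2)[folded a_def b_def] _ Aa Ab] E AB AA
    by (simp_all add: N_def)
  have norms: "norm (pdu x p) = sqrt E" "norm (pdv x p) = sqrt E"
    using E by (simp_all add: assms(1,2) norm_eq_sqrt_inner E_def a_def b_def)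
  have s11: "sigma11 x p = (1 / E) *\<^sub>R N A" and s12: "sigma12 x p = (1 / E) *\<^sub>R N B"
    using E by (simp_all add: sigma11_def sigma12_def sff11_def sff12_def np fE norms assms(3,4) A_def B_def)
  show "sigma11 x p \<bullet> sigma12 x p = 0"
    using NAB by (simp add: s11 s12)
  show "(fE x p)\<^sup>2 * ((norm (sigma11 x p))\<^sup>2 - (norm (sigma12 x p))\<^sup>2) = 1"
  proof -
    have "(norm (N A))\<^sup>2 - (norm (N B))\<^sup>2 = 1"
      using NAB(2) by (simp add: power2_norm_eq_inner)
    then show ?thesis
      using E(1) by (simp add: s11 s12 fE power_mult_distrib power_divide field_simps)
  qed
  have "N (- A) = - N A"
    by (simp add: N_def algebra_simps)
  then show "mean_curv_vec x p = 0"
    using fEG by (simp add: mean_curv_vec_def sff11_def sff22_def np assms(3,5) A_def)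
qed

lemma cdot_quotient:
  fixes w w' :: "complex^'n" and c d :: complex
  assumes "cdot w w = 0" and "cdot w' w = 0" and "c \<noteq> 0"
  defines "\<phi> \<equiv> (1 / c) *s w" and "\<phi>' \<equiv> (1 / c) *s w' - d *s w"
  shows "cdot \<phi> \<phi> = 0" and "cdot \<phi>' \<phi> = 0" and "cdot \<phi>' \<phi>' = cdot w' w' / c\<^sup>2"
proof -
  have "cdot w w' = 0"
    using assms(2) by (simp add: cdot_commute)
  then show "cdot \<phi> \<phi> = 0" "cdot \<phi>' \<phi> = 0" "cdot \<phi>' \<phi>' = cdot w' w' / c\<^sup>2"
    using assms(1,2) by (simp_all add: \<phi>_def \<phi>'_def power2_eq_square)
qed

lemma vderiv_quotient:
  fixes w :: "complex \<Rightarrow> complex^'n"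
  assumes "open D" and "p \<in> D"
    and "\<And>i. ((\<lambda>z. w z $ i) has_field_derivative w' $ i) (at p)"
    and "(c has_field_derivative c') (at p)" and "c p \<noteq> 0"
    and "\<And>z. z \<in> D \<Longrightarrow> \<Phi> z = (1 / c z) *s w z"
  shows "vderiv \<Phi> p = (1 / c p) *s w' - (c' / (c p)\<^sup>2) *s w p"
proof -
  have "((\<lambda>z. \<Phi> z $ i) has_field_derivative (w' $ i * c p - w p $ i * c') / (c p * c p)) (at p)" for i
  proof (rule has_field_derivative_transform_within_open[OF _ assms(1,2)])
    show "((\<lambda>z. w z $ i / c z) has_field_derivative (w' $ i * c p - w p $ i * c') / (c p * c p)) (at p)"
      by (rule DERIV_divide[OF assms(3,4,5)])
  qed (simp add: assms(6))
  then have "deriv (\<lambda>z. \<Phi> z $ i) p = (w' $ i * c p - w p $ i * c') / (c p * c p)" for i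
    by (rule DERIV_imp_deriv)
  then show ?thesis
    using assms(5) by (simp add: vec_eq_iff vderiv_def power2_eq_square diff_divide_distrib)
qed

definition weierstrass_vec :: "complex \<Rightarrow> complex \<Rightarrow> complex^4" where
  "weierstrass_vec a b = vector [\<i>/2 * (a*b + 1), 1/2 * (a*b - 1), 1/2 * (a + b), \<i>/2 * (a - b)]"

definition weierstrass_vec_diff :: "complex \<Rightarrow> complex \<Rightarrow> complex \<Rightarrow> complex \<Rightarrow> complex^4" where
  "weierstrass_vec_diff a b a' b' =
     vector [\<i>/2 * (a'*b + a*b'), 1/2 * (a'*b + a*b'), 1/2 * (a' + b'), \<i>/2 * (a' - b')]"

lemma cdot_4: "cdot v w = v$1 * w$1 + v$2 * w$2 + v$3 * w$3 + v$4 * w$4"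
  for v w :: "complex^4"
  by (simp add: cdot_def sum_4)

lemma cdot_weierstrass_vec:
  "cdot (weierstrass_vec a b) (weierstrass_vec a b) = 0"
  "cdot (weierstrass_vec_diff a b a' b') (weierstrass_vec a b) = 0"
  "cdot (weierstrass_vec_diff a b a' b') (weierstrass_vec_diff a b a' b') = a' * b'"
  by (simp_all add: cdot_4 weierstrass_vec_def weierstrass_vec_diff_def vector_def
      power2_eq_square field_simps)

lemma weierstrass_vec_nonzero: "weierstrass_vec a b \<noteq> 0"
proof
  assume "weierstrass_vec a b = 0"
  then have "weierstrass_vec a b $ 1 - \<i> * weierstrass_vec a b $ 2 = 0"
    by simp
  then show False
    by (simp add: weierstrass_vec_def vector_def field_simps)
qed

lemma has_field_derivative_weierstrass_vec:
  assumes "(g1 has_field_derivative a') (at p)" and "(g2 has_field_derivative b') (at p)"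
  shows "((\<lambda>z. weierstrass_vec (g1 z) (g2 z) $ i) has_field_derivative
      weierstrass_vec_diff (g1 p) (g2 p) a' b' $ i) (at p)"
  using exhaust_4[of i] assms
  by (auto simp: weierstrass_vec_def weierstrass_vec_diff_def vector_def
      intro!: derivative_eq_intros)

lemma Re_surface_minimal_canonical:
  fixes \<Psi> :: "complex \<Rightarrow> complex^4"
  assumes "open D" and "D \<noteq> {}" and holo: "\<And>i. (\<lambda>z. \<Psi> z $ i) holomorphic_on D"
    and "\<And>z. z \<in> D \<Longrightarrow> cdot (vderiv \<Psi> z) (vderiv \<Psi> z) = 0"
    and "\<And>z. z \<in> D \<Longrightarrow> vderiv \<Psi> z \<noteq> 0"
    and "\<And>z. z \<in> D \<Longrightarrow> cdot (vderiv (vderiv \<Psi>) z) (vderiv \<Psi> z) = 0"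
    and "\<And>z. z \<in> D \<Longrightarrow> cdot (vderiv (vderiv \<Psi>) z) (vderiv (vderiv \<Psi>) z) = 1"
  defines "x \<equiv> \<lambda>z. Re_vec (\<Psi> z)"
  shows "minimal_general_type D x \<and> canonical_first_type D x"
proof -
  have curv: "fE x p = fG x p" "fF x p = 0" "mean_curv_vec x p = 0" "sigma11 x p \<bullet> sigma12 x p = 0"
    "(fE x p)\<^sup>2 * ((norm (sigma11 x p))\<^sup>2 - (norm (sigma12 x p))\<^sup>2) = 1" if "p \<in> D" for p
    using Re_surface_curvature[OF Re_surface_derivatives(1-4,6)[OF assms(1) that holo] assms(4-7)[OF that]]
    by (simp_all add: x_def)
  have "\<not> superconformal_point x p" if "p \<in> D" for p
    using curv(5)[OF that] by (auto simp: superconformal_point_def)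
  then show ?thesis
    using curv regular_surface_Re_vec[OF assms(1-5)]
    by (simp add: x_def minimal_general_type_def minimal_surface_def canonical_first_type_def)
qed

theorem mainTheorem4:
  fixes D :: "complex set" and g1 g2 s \<Psi>1 \<Psi>2 \<Psi>3 \<Psi>4 :: "complex \<Rightarrow> complex"
  assumes "open D" and "connected D" and "D \<noteq> {}"
    and "g1 holomorphic_on D" and "g2 holomorphic_on D"
    and "\<And>z. z \<in> D \<Longrightarrow> deriv g1 z * deriv g2 z \<noteq> 0"
    and "s holomorphic_on D" and "\<And>z. z \<in> D \<Longrightarrow> (s z)^2 = deriv g1 z * deriv g2 z"
    and "\<Psi>1 holomorphic_on D" and "\<Psi>2 holomorphic_on D"
    and "\<Psi>3 holomorphic_on D" and "\<Psi>4 holomorphic_on D"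
    and "\<And>z. z \<in> D \<Longrightarrow> deriv \<Psi>1 z = (\<i> / 2) * (g1 z * g2 z + 1) / s z"
    and "\<And>z. z \<in> D \<Longrightarrow> deriv \<Psi>2 z = (1 / 2) * (g1 z * g2 z - 1) / s z"
    and "\<And>z. z \<in> D \<Longrightarrow> deriv \<Psi>3 z = (1 / 2) * (g1 z + g2 z) / s z"
    and "\<And>z. z \<in> D \<Longrightarrow> deriv \<Psi>4 z = (\<i> / 2) * (g1 z - g2 z) / s z"
  defines "x \<equiv> (\<lambda>z. vector [Re (\<Psi>1 z), Re (\<Psi>2 z), Re (\<Psi>3 z), Re (\<Psi>4 z)] :: real^4)"
  shows "minimal_general_type D x \<and> canonical_first_type D x"
proof -
  define \<Psi> where "\<Psi> z = (vector [\<Psi>1 z, \<Psi>2 z, \<Psi>3 z, \<Psi>4 z] :: complex^4)" for z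
  have x: "x = (\<lambda>z. Re_vec (\<Psi> z))"
    by (simp add: x_def \<Psi>_def fun_eq_iff vec_eq_iff forall_4 vector_def)
  have holo: "(\<lambda>z. \<Psi> z $ i) holomorphic_on D" for i
    using exhaust_4[of i] assms(9-12) by (auto simp: \<Psi>_def vector_def)
  have s: "s z \<noteq> 0" if "z \<in> D" for z
    using assms(6,8)[OF that] by auto
  have \<Phi>: "vderiv \<Psi> z = (1 / s z) *s weierstrass_vec (g1 z) (g2 z)" if "z \<in> D" for z
    using assms(13-16)[OF that]
    by (simp add: vec_eq_iff forall_4 vderiv_def \<Psi>_def vector_def weierstrass_vec_def)
  have \<Phi>': "vderiv (vderiv \<Psi>) p = (1 / s p) *s weierstrass_vec_diff (g1 p) (g2 p) (deriv g1 p) (deriv g2 p)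
      - (deriv s p / (s p)\<^sup>2) *s weierstrass_vec (g1 p) (g2 p)" if "p \<in> D" for p
    using holomorphic_derivI[OF assms(4) assms(1) that] holomorphic_derivI[OF assms(5) assms(1) that]
      holomorphic_derivI[OF assms(7) assms(1) that]
    by (intro vderiv_quotient[OF assms(1) that, where w = "\<lambda>z. weierstrass_vec (g1 z) (g2 z)"]
        has_field_derivative_weierstrass_vec s \<Phi> that)
  have "cdot (vderiv \<Psi> z) (vderiv \<Psi> z) = 0" "vderiv \<Psi> z \<noteq> 0"
    "cdot (vderiv (vderiv \<Psi>) z) (vderiv \<Psi> z) = 0"
    "cdot (vderiv (vderiv \<Psi>) z) (vderiv (vderiv \<Psi>) z) = 1" if "z \<in> D" for z
    unfolding \<Phi>[OF that] \<Phi>'[OF that] cdot_quotient[OF cdot_weierstrass_vec(1,2) s[OF that]]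
      cdot_weierstrass_vec(3) assms(8)[OF that, symmetric]
    using s[OF that] weierstrass_vec_nonzero by (simp_all add: vec_eq_iff)
  then show ?thesis
    unfolding x by (intro Re_surface_minimal_canonical[OF assms(1,3) holo])
qed

end
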